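(* Let $n\geq 3$ and $m\in\{1,\ldots,n\}$ be integers. Then the community code $C_{n,m}\subseteq\mathbb{F}_2^{N}$, $N=\binom{n}{2}$, is not a linear code (i.e., it is not an $\mathbb{F}_2$-linear subspace of $\mathbb{F}_2^N$).
   Context: For integers $n\geq 2$, $N=\binom{n}{2}$ and $1\leq m\leq n$, the community code $C_{n,m}\subseteq\mathbb{F}_2^N$ consists of exactly those binary vectors of length $N$ that are the upper-triangular (off-diagonal) part of the adjacency matrix of a simple undirected graph on the labeled vertex set $\{1,\ldots,n\}$ which is a disjoint union of cliques, each clique having at least $m$ vertices. (Equivalently, codewords correspond to partitions of $\{1,\ldots,n\}$ into parts of size at least $m$, where two vertices are adjacent iff they lie in the same part.) *)

theory Defs
  imports Main "HOL.Modules" "HOL-Library.Function_Algebras" "HOL-Library.Z2" "HOL-Library.Disjoint_Sets"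
begin

text \<open>Coordinates of F_2^N, N = n choose 2: pairs (i,j) with 1 \<le> i < j \<le> n.
  Vectors are functions (nat \<times> nat) \<Rightarrow> bit vanishing outside these coordinates.\<close>

definition coords :: "nat \<Rightarrow> (nat \<times> nat) set" where
  "coords n = {(i, j). 1 \<le> i \<and> i < j \<and> j \<le> n}"

text \<open>Upper-triangular part of the adjacency matrix of the disjoint union of
  cliques given by the partition P of {1..n}.\<close>

definition clique_vector :: "nat \<Rightarrow> nat set set \<Rightarrow> (nat \<times> nat) \<Rightarrow> bit" where
  "clique_vector n P = (\<lambda>(i, j). if (i, j) \<in> coords n \<and> (\<exists>B\<in>P. i \<in> B \<and> j \<in> B) then 1 else 0)"

definition community_code :: "nat \<Rightarrow> nat \<Rightarrow> ((nat \<times> nat) \<Rightarrow> bit) set" where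
  "community_code n m = {clique_vector n P | P. partition_on {1..n} P \<and> (\<forall>B\<in>P. card B \<ge> m)}"

definition F2_linear :: "((nat \<times> nat) \<Rightarrow> bit) set \<Rightarrow> bool" where
  "F2_linear C \<longleftrightarrow> module.subspace (\<lambda>(c::bit) x p. c * x p) C"

end

theory Submission
  imports Defs
begin

text \<open>Codewords are transitive
  relations: if i ~ j and j ~ k then i ~ k. For m \<ge> 2 the vertex 1 has a neighbour, so 0
  is not a codeword. For m = 1 the sum of the codewords of {{1,2},{3..n}} and {{1},{2..n}}
  has 1 ~ 2 and 2 ~ 3 but not 1 ~ 3, so it is not a codeword.\<close>

lemma module_pointwise_scale: "module (\<lambda>(c::'s::comm_ring_1) (x::'a \<Rightarrow> 's) p. c * x p)"
  by unfold_locales (auto simp: fun_eq_iff algebra_simps)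

lemma F2_linear_zero: "F2_linear C \<Longrightarrow> 0 \<in> C"
  unfolding F2_linear_def by (rule module.subspace_0[OF module_pointwise_scale])

lemma F2_linear_add: "F2_linear C \<Longrightarrow> x \<in> C \<Longrightarrow> y \<in> C \<Longrightarrow> x + y \<in> C"
  unfolding F2_linear_def by (rule module.subspace_add[OF module_pointwise_scale])

lemma clique_vector_eq_1_iff:
  "clique_vector n P (i, j) = 1 \<longleftrightarrow> (i, j) \<in> coords n \<and> (\<exists>B\<in>P. i \<in> B \<and> j \<in> B)"
  by (simp add: clique_vector_def)

lemma clique_vector_in_community_code:
  "partition_on {1..n} P \<Longrightarrow> \<forall>B\<in>P. m \<le> card B \<Longrightarrow> clique_vector n P \<in> community_code n m"
  unfolding community_code_def by blast

lemma community_code_transitive: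
  assumes "x \<in> community_code n m" and "x (i, j) = 1" and "x (j, k) = 1"
  shows "x (i, k) = 1"
proof -
  obtain P where P: "partition_on {1..n} P" and x: "x = clique_vector n P"
    using assms(1) unfolding community_code_def by blast
  obtain B where B: "B \<in> P" "i \<in> B" "j \<in> B" and ij: "(i, j) \<in> coords n"
    using assms(2) by (auto simp: x clique_vector_eq_1_iff)
  obtain B' where B': "B' \<in> P" "j \<in> B'" "k \<in> B'" and jk: "(j, k) \<in> coords n"
    using assms(3) by (auto simp: x clique_vector_eq_1_iff)
  have "B = B'"
    using partition_onD2[OF P] B B' by (auto dest: disjointD)
  moreover have "(i, k) \<in> coords n"
    using ij jk by (auto simp: coords_def)
  ultimately show ?thesis
    using B B' by (auto simp: x clique_vector_eq_1_iff)
qed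

lemma zero_notin_community_code:
  assumes "1 \<le> n" and "2 \<le> m"
  shows "0 \<notin> community_code n m"
proof
  assume "0 \<in> community_code n m"
  then obtain P where P: "partition_on {1..n} P" "\<forall>B\<in>P. m \<le> card B"
    and zero: "0 = clique_vector n P"
    unfolding community_code_def by blast
  have "1 \<in> \<Union>P"
    using partition_onD1[OF P(1)] assms(1) by auto
  then obtain B where B: "B \<in> P" "1 \<in> B"
    by blast
  have "B \<subseteq> {1..n}"
    using partition_onD1[OF P(1)] B(1) by auto
  have "\<not> B \<subseteq> {1}"
    using P(2) B(1) assms(2) card_mono[of "{1}" B] by fastforce
  then obtain j where "j \<in> B" "j \<noteq> 1"
    by blast
  with \<open>B \<subseteq> {1..n}\<close> have "(1, j) \<in> coords n"
    by (auto simp: coords_def)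
  with B \<open>j \<in> B\<close> have "clique_vector n P (1, j) = 1"
    by (auto simp: clique_vector_eq_1_iff)
  with zero show False
    by (metis zero_fun_def zero_neq_one)
qed

lemma community_code_1_not_add_closed:
  assumes "3 \<le> n"
  obtains x y where "x \<in> community_code n 1" and "y \<in> community_code n 1"
    and "x + y \<notin> community_code n 1"
proof
  define x where "x = clique_vector n {{1, 2}, {3..n}}"
  define y where "y = clique_vector n {{1}, {2..n}}"
  show "x \<in> community_code n 1"
    unfolding x_def using assms
    by (intro clique_vector_in_community_code) (auto simp: partition_on_def disjoint_def)
  show "y \<in> community_code n 1"
    unfolding y_def using assms
    by (intro clique_vector_in_community_code) (auto simp: partition_on_def disjoint_def)
  have "x (1, 2) = 1" "x (2, 3) = 0" "x (1, 3) = 0"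
    and "y (1, 2) = 0" "y (2, 3) = 1" "y (1, 3) = 0"
    using assms by (simp_all add: x_def y_def clique_vector_def coords_def)
  then have "(x + y) (1, 2) = 1" "(x + y) (2, 3) = 1" "(x + y) (1, 3) = 0"
    by simp_all
  then show "x + y \<notin> community_code n 1"
    using community_code_transitive[of "x + y" n 1 1 2 3] by auto
qed

theorem lemma2:
  fixes n m :: nat
  assumes "n \<ge> 3" and "1 \<le> m" and "m \<le> n"
  shows "\<not> F2_linear (community_code n m)"
proof
  assume linear: "F2_linear (community_code n m)"
  show False
  proof (cases "m = 1")
    case True
    obtain x y where "x \<in> community_code n 1" "y \<in> community_code n 1"
      and "x + y \<notin> community_code n 1"
      using community_code_1_not_add_closed[OF assms(1)] .
    with linear True show False
      using F2_linear_add by blast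
  next
    case False
    with assms have "0 \<notin> community_code n m"
      by (intro zero_notin_community_code) auto
    with linear show False
      using F2_linear_zero by blast
  qed
qed

end
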